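(* Let $n\ge1$, $t>0$, $\lambda\in\mathbb{R}\setminus\{0\}$. For all $\mathbf a,\mathbf b\in\mathbb{R}^n$, $$\int_{\mathbb{C}^n}\int_{\mathbb{C}^n} p_{2t}^\lambda(\mathbf z+\mathbf a,\mathbf w+\mathbf b)\,e^{\frac{i\lambda}{2}(\mathbf a\cdot\mathbf w-\mathbf b\cdot\mathbf z)}\,\overline{p_{2t}^\lambda(\mathbf z,\mathbf w)}\,W_t^\lambda(\mathbf z,\mathbf w)\,d\mathbf z\,d\mathbf w=p_{2t}^\lambda(\mathbf a,\mathbf b).$$
   Context: For $\mathbf a,\mathbf b\in\mathbb{C}^n$ write $\mathbf a\cdot\mathbf b=\sum_j a_jb_j$ (complex bilinear). For $s>0$, $\lambda\in\mathbb{R}\setminus\{0\}$ and $(\mathbf z,\mathbf w)\in\mathbb{C}^n\times\mathbb{C}^n$ let $p_s^\lambda(\mathbf z,\mathbf w)=(4\pi)^{-n}\left(\frac{\lambda}{\sinh(s\lambda)}\right)^n\exp\!\big(-\tfrac{\lambda}{4}\coth(s\lambda)(\mathbf z\cdot\mathbf z+\mathbf w\cdot\mathbf w)\big)$. Define $W_t^\lambda(\mathbf x+i\mathbf y,\mathbf u+i\mathbf v)=4^n e^{\lambda(\mathbf u\cdot\mathbf y-\mathbf v\cdot\mathbf x)}\,p_{2t}^\lambda(2\mathbf y,2\mathbf v)$ for $\mathbf x,\mathbf y,\mathbf u,\mathbf v\in\mathbb{R}^n$. Integration is with respect to Lebesgue measure on $\mathbb{C}^n\times\mathbb{C}^n\cong\mathbb{R}^{4n}$.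 *)

theory Defs
  imports "HOL-Analysis.Analysis"
begin

text \<open>Complex bilinear (not Hermitian) dot product on C^n.\<close>
definition cdot :: "complex^'n \<Rightarrow> complex^'n \<Rightarrow> complex" where
  "cdot a b = (\<Sum>j\<in>UNIV. a$j * b$j)"

definition cvec :: "real^'n \<Rightarrow> complex^'n" where
  "cvec a = (\<chi> j. complex_of_real (a$j))"

definition re_vec :: "complex^'n \<Rightarrow> real^'n" where
  "re_vec z = (\<chi> j. Re (z$j))"

definition im_vec :: "complex^'n \<Rightarrow> real^'n" where
  "im_vec z = (\<chi> j. Im (z$j))"

definition coth :: "real \<Rightarrow> real" where
  "coth x = cosh x / sinh x"

definition pker :: "real \<Rightarrow> real \<Rightarrow> complex^'n \<Rightarrow> complex^'n \<Rightarrow> complex" where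
  "pker s lam z w =
     complex_of_real ((4*pi) powi (- int CARD('n)) * (lam / sinh (s*lam)) ^ CARD('n))
     * exp (- complex_of_real (lam/4 * coth (s*lam)) * (cdot z z + cdot w w))"

definition Wker :: "real \<Rightarrow> real \<Rightarrow> complex^'n \<Rightarrow> complex^'n \<Rightarrow> complex" where
  "Wker t lam z w =
     (let x = re_vec z; y = im_vec z; u = re_vec w; v = im_vec w in
      complex_of_real (4 ^ CARD('n) * exp (lam * (u \<bullet> y - v \<bullet> x)))
      * pker (2*t) lam (cvec (2 *\<^sub>R y)) (cvec (2 *\<^sub>R v)))"

end

theory Submission
  imports Defs "HOL-Probability.Characteristic_Functions"
begin

(*
  In one coordinate, with z = x + iy and w = u + iv, the integrand is the product of a complex
  Gaussian in the plane (x, v) and one in the plane (u, y): the phase and the weight W only couple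
  Re z with Im w and Re w with Im z.  Lebesgue measure on C^n x C^n is the product of Lebesgue
  measures on these 2n planes, so the integral is a product of 2n two-dimensional Gaussian
  integrals, each computed in closed form by completing the square and reducing to the
  characteristic function of the standard normal distribution.  For the two planes of one
  coordinate the imaginary exponents cancel, and since 4K^2 - lam^2/4 = (2 pi P)^2 for the
  prefactor P and exponent K of p_{2t}, what remains is exactly the coordinate factor
  P exp (-K (a^2 + b^2)) of p_{2t}(a, b).
*)

lemma has_bochner_integral_gaussian_iexp:
  fixes \<theta> :: real
  shows "has_bochner_integral lborel (\<lambda>x. of_real (exp (- x\<^sup>2 / 2)) * iexp (\<theta> * x))
           (of_real (sqrt (2 * pi) * exp (- \<theta>\<^sup>2 / 2)))"
proof -
  interpret real_distribution std_normal_distribution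
    by (rule real_dist_normal_dist)
  have "integrable std_normal_distribution (\<lambda>x. iexp (\<theta> * x))"
    by (rule integrable_iexp) auto
  then have "integrable lborel (\<lambda>x. std_normal_density x *\<^sub>R iexp (\<theta> * x))"
    by (subst (asm) integrable_density) auto
  moreover have "(\<integral>x. std_normal_density x *\<^sub>R iexp (\<theta> * x) \<partial>lborel) = of_real (exp (- \<theta>\<^sup>2 / 2))"
    using fun_cong[OF char_std_normal_distribution, of \<theta>] unfolding char_def
    by (subst (asm) integral_density) auto
  ultimately have "has_bochner_integral lborel
      (\<lambda>x. of_real (sqrt (2 * pi)) * (std_normal_density x *\<^sub>R iexp (\<theta> * x)))
      (of_real (sqrt (2 * pi)) * of_real (exp (- \<theta>\<^sup>2 / 2)))"
    by (intro has_bochner_integral_mult_right) (simp add: has_bochner_integral_iff)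
  then show ?thesis
    by (simp add: std_normal_density_def scaleR_conv_of_real mult_ac)
qed

lemma complex_quadratic_complete_square:
  fixes A y :: real and \<beta> :: complex
  assumes "A > 0"
  defines "c \<equiv> 1 / sqrt (2 * A)"
  shows "\<beta> * of_real (Re \<beta> / (2 * A) + c * y) - of_real A * of_real ((Re \<beta> / (2 * A) + c * y)\<^sup>2)
      = \<beta>\<^sup>2 / of_real (4 * A) + of_real ((Im \<beta> * c)\<^sup>2 / 2)
        + (of_real (- y\<^sup>2 / 2) + \<i> * of_real (Im \<beta> * c * y))"
    (is "?lhs = ?rhs")
proof (rule complex_eqI)
  have "c * c = 1 / (2 * A)"
    using assms by (simp add: c_def)
  then show "Re ?lhs = Re ?rhs"
    using assms(1) by (simp add: power2_eq_square field_simps) algebra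
  show "Im ?lhs = Im ?rhs"
    using assms(1) by (simp add: power2_eq_square field_simps)
qed

lemma has_bochner_integral_complex_gaussian:
  fixes A :: real and \<beta> :: complex
  assumes "A > 0"
  shows "has_bochner_integral lborel (\<lambda>x. exp (\<beta> * of_real x - of_real A * of_real (x\<^sup>2)))
           (of_real (sqrt (pi / A)) * exp (\<beta>\<^sup>2 / of_real (4 * A)))"
proof -
  define c where "c = 1 / sqrt (2 * A)"
  define t where "t = Re \<beta> / (2 * A)"
  define \<theta> where "\<theta> = Im \<beta> * c"
  define \<kappa> where "\<kappa> = \<beta>\<^sup>2 / of_real (4 * A) + of_real (\<theta>\<^sup>2 / 2)"
  have "c > 0"
    using assms by (simp add: c_def)
  \<comment> \<open>Completing the square with the real shift \<open>t\<close> leaves a standard Gaussian times a character.\<close>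
  have shift: "exp (\<beta> * of_real (t + c * y) - of_real A * of_real ((t + c * y)\<^sup>2))
      = exp \<kappa> * (of_real (exp (- y\<^sup>2 / 2)) * iexp (\<theta> * y))" for y
  proof -
    have "\<beta> * of_real (t + c * y) - of_real A * of_real ((t + c * y)\<^sup>2)
        = \<kappa> + (of_real (- y\<^sup>2 / 2) + \<i> * of_real (\<theta> * y))"
      unfolding t_def \<theta>_def \<kappa>_def c_def by (rule complex_quadratic_complete_square[OF assms])
    then show ?thesis
      by (simp only: exp_add exp_of_real)
  qed
  have "has_bochner_integral lborel (\<lambda>y. exp \<kappa> * (of_real (exp (- y\<^sup>2 / 2)) * iexp (\<theta> * y)))
      (exp \<kappa> * of_real (sqrt (2 * pi) * exp (- \<theta>\<^sup>2 / 2)))"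
    by (rule has_bochner_integral_mult_right[OF has_bochner_integral_gaussian_iexp])
  then have shifted: "has_bochner_integral lborel
      (\<lambda>y. exp (\<beta> * of_real (t + c * y) - of_real A * of_real ((t + c * y)\<^sup>2)))
      (exp \<kappa> * of_real (sqrt (2 * pi) * exp (- \<theta>\<^sup>2 / 2)))"
    unfolding shift .
  have "\<kappa> + of_real (- \<theta>\<^sup>2 / 2) = \<beta>\<^sup>2 / of_real (4 * A)"
    by (simp add: \<kappa>_def)
  then have "exp \<kappa> * of_real (exp (- \<theta>\<^sup>2 / 2)) = exp (\<beta>\<^sup>2 / of_real (4 * A))"
    by (metis exp_add exp_of_real)
  moreover have "sqrt (2 * pi) = sqrt (pi / A) / c"
    using assms by (simp add: c_def real_sqrt_divide real_sqrt_mult field_simps)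
  ultimately have "exp \<kappa> * of_real (sqrt (2 * pi) * exp (- \<theta>\<^sup>2 / 2))
      = of_real (sqrt (pi / A) / c) * exp (\<beta>\<^sup>2 / of_real (4 * A))"
    by (simp add: mult.left_commute)
  also have "\<dots> = (of_real (sqrt (pi / A)) * exp (\<beta>\<^sup>2 / of_real (4 * A))) /\<^sub>R \<bar>c\<bar>"
    using \<open>c > 0\<close> by (simp only: abs_of_pos scaleR_conv_of_real of_real_mult of_real_inverse divide_inverse mult_ac)
  finally show ?thesis
    using shifted \<open>c > 0\<close> by (subst lborel_has_bochner_integral_real_affine_iff[where c = c and t = t]) auto
qed

definition gaussian2 :: "real \<Rightarrow> real \<Rightarrow> real \<Rightarrow> complex \<Rightarrow> complex \<Rightarrow> real \<times> real \<Rightarrow> complex" where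
  "gaussian2 A B c \<beta>\<^sub>1 \<beta>\<^sub>2 = (\<lambda>(x, y). exp (\<beta>\<^sub>1 * of_real x + \<beta>\<^sub>2 * of_real y
      - of_real A * of_real (x\<^sup>2) - of_real c * of_real x * of_real y - of_real B * of_real (y\<^sup>2)))"

lemma borel_measurable_gaussian2: "gaussian2 A B c \<beta>\<^sub>1 \<beta>\<^sub>2 \<in> borel_measurable borel"
  unfolding gaussian2_def case_prod_beta by (intro borel_measurable_continuous_onI continuous_intros)

lemma norm_gaussian2:
  "norm (gaussian2 A B c \<beta>\<^sub>1 \<beta>\<^sub>2 p) = Re (gaussian2 A B c (of_real (Re \<beta>\<^sub>1)) (of_real (Re \<beta>\<^sub>2)) p)"
proof -
  have "gaussian2 A B c (of_real (Re \<beta>\<^sub>1)) (of_real (Re \<beta>\<^sub>2)) p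
      = of_real (exp (Re (\<beta>\<^sub>1 * of_real (fst p) + \<beta>\<^sub>2 * of_real (snd p)) - A * (fst p)\<^sup>2
          - c * fst p * snd p - B * (snd p)\<^sup>2))"
    by (simp add: gaussian2_def split_beta exp_of_real[symmetric])
  then show ?thesis
    by (simp add: gaussian2_def split_beta)
qed

lemma has_bochner_integral_gaussian2_slice:
  assumes "B > 0"
  shows "has_bochner_integral lborel (\<lambda>y. gaussian2 A B c \<beta>\<^sub>1 \<beta>\<^sub>2 (x, y))
      (of_real (sqrt (pi / B)) * exp (\<beta>\<^sub>2\<^sup>2 / of_real (4 * B))
        * exp ((\<beta>\<^sub>1 - of_real c * \<beta>\<^sub>2 / of_real (2 * B)) * of_real x
               - of_real (A - c\<^sup>2 / (4 * B)) * of_real (x\<^sup>2)))"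
proof -
  have "has_bochner_integral lborel
      (\<lambda>y. exp (\<beta>\<^sub>1 * of_real x - of_real A * of_real (x\<^sup>2))
         * exp ((\<beta>\<^sub>2 - of_real c * of_real x) * of_real y - of_real B * of_real (y\<^sup>2)))
      (exp (\<beta>\<^sub>1 * of_real x - of_real A * of_real (x\<^sup>2))
         * (of_real (sqrt (pi / B)) * exp ((\<beta>\<^sub>2 - of_real c * of_real x)\<^sup>2 / of_real (4 * B))))"
    by (intro has_bochner_integral_mult_right has_bochner_integral_complex_gaussian assms)
  moreover have integrand: "exp (\<beta>\<^sub>1 * of_real x - of_real A * of_real (x\<^sup>2))
         * exp ((\<beta>\<^sub>2 - of_real c * of_real x) * of_real y - of_real B * of_real (y\<^sup>2))
      = gaussian2 A B c \<beta>\<^sub>1 \<beta>\<^sub>2 (x, y)" for y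
    unfolding gaussian2_def exp_add[symmetric] by (simp add: algebra_simps)
  moreover have "\<beta>\<^sub>1 * of_real x - of_real A * of_real (x\<^sup>2) + (\<beta>\<^sub>2 - of_real c * of_real x)\<^sup>2 / of_real (4 * B)
      = \<beta>\<^sub>2\<^sup>2 / of_real (4 * B) + ((\<beta>\<^sub>1 - of_real c * \<beta>\<^sub>2 / of_real (2 * B)) * of_real x
          - of_real (A - c\<^sup>2 / (4 * B)) * of_real (x\<^sup>2))"
    using assms by (simp add: field_simps power2_eq_square)
  then have completed_square: "exp (\<beta>\<^sub>1 * of_real x - of_real A * of_real (x\<^sup>2))
         * (of_real (sqrt (pi / B)) * exp ((\<beta>\<^sub>2 - of_real c * of_real x)\<^sup>2 / of_real (4 * B)))
      = of_real (sqrt (pi / B)) * exp (\<beta>\<^sub>2\<^sup>2 / of_real (4 * B))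
        * exp ((\<beta>\<^sub>1 - of_real c * \<beta>\<^sub>2 / of_real (2 * B)) * of_real x
               - of_real (A - c\<^sup>2 / (4 * B)) * of_real (x\<^sup>2))"
    by (metis (no_types, lifting) exp_add mult.assoc mult.left_commute)
  ultimately show ?thesis
    unfolding integrand completed_square by simp
qed

lemma gaussian2_iterated_value:
  fixes A B c :: real and \<beta>\<^sub>1 \<beta>\<^sub>2 :: complex
  assumes "c\<^sup>2 < 4 * A * B" and "B > 0"
  shows "of_real (sqrt (pi / B)) * exp (\<beta>\<^sub>2\<^sup>2 / of_real (4 * B))
        * (of_real (sqrt (pi / (A - c\<^sup>2 / (4 * B))))
           * exp ((\<beta>\<^sub>1 - of_real c * \<beta>\<^sub>2 / of_real (2 * B))\<^sup>2 / of_real (4 * (A - c\<^sup>2 / (4 * B)))))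
      = of_real (pi / sqrt (A * B - c\<^sup>2 / 4))
        * exp ((of_real B * \<beta>\<^sub>1\<^sup>2 + of_real A * \<beta>\<^sub>2\<^sup>2 - of_real c * \<beta>\<^sub>1 * \<beta>\<^sub>2) / of_real (4 * A * B - c\<^sup>2))"
proof -
  define A' where "A' = A - c\<^sup>2 / (4 * B)"
  have "B * A' = A * B - c\<^sup>2 / 4"
    using assms(2) by (simp add: A'_def field_simps)
  then have sqrt_prod: "sqrt (pi / B) * sqrt (pi / A') = pi / sqrt (A * B - c\<^sup>2 / 4)"
    by (simp add: real_sqrt_mult[symmetric] real_sqrt_divide power2_eq_square)
  have A': "complex_of_real (4 * A') = of_real (4 * A * B - c\<^sup>2) / of_real B"
    using assms(2) by (simp add: A'_def field_simps)
  have "4 * A * B - c\<^sup>2 \<noteq> 0"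
    using assms(1) by simp
  then have "complex_of_real (4 * A * B - c\<^sup>2) \<noteq> 0" "complex_of_real B \<noteq> 0"
    using assms(2) by (simp_all only: of_real_eq_0_iff) simp
  then have exponent: "\<beta>\<^sub>2\<^sup>2 / of_real (4 * B) + (\<beta>\<^sub>1 - of_real c * \<beta>\<^sub>2 / of_real (2 * B))\<^sup>2 / of_real (4 * A')
      = (of_real B * \<beta>\<^sub>1\<^sup>2 + of_real A * \<beta>\<^sub>2\<^sup>2 - of_real c * \<beta>\<^sub>1 * \<beta>\<^sub>2) / of_real (4 * A * B - c\<^sup>2)"
    unfolding A' by (simp add: field_simps power2_eq_square)
  have "of_real (sqrt (pi / B)) * exp (\<beta>\<^sub>2\<^sup>2 / of_real (4 * B))
        * (of_real (sqrt (pi / A')) * exp ((\<beta>\<^sub>1 - of_real c * \<beta>\<^sub>2 / of_real (2 * B))\<^sup>2 / of_real (4 * A')))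
      = of_real (sqrt (pi / B) * sqrt (pi / A'))
        * exp (\<beta>\<^sub>2\<^sup>2 / of_real (4 * B) + (\<beta>\<^sub>1 - of_real c * \<beta>\<^sub>2 / of_real (2 * B))\<^sup>2 / of_real (4 * A'))"
    unfolding exp_add of_real_mult by (simp only: mult_ac)
  then show ?thesis
    unfolding sqrt_prod exponent by (simp only: A'_def)
qed

lemma has_bochner_integral_gaussian2:
  assumes "A > 0" and "c\<^sup>2 < 4 * A * B"
  shows "has_bochner_integral lborel (gaussian2 A B c \<beta>\<^sub>1 \<beta>\<^sub>2)
      (of_real (pi / sqrt (A * B - c\<^sup>2 / 4))
        * exp ((of_real B * \<beta>\<^sub>1\<^sup>2 + of_real A * \<beta>\<^sub>2\<^sup>2 - of_real c * \<beta>\<^sub>1 * \<beta>\<^sub>2) / of_real (4 * A * B - c\<^sup>2)))"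
proof -
  define A' where "A' = A - c\<^sup>2 / (4 * B)"
  have "B > 0"
    using assms by (smt (verit) mult_nonneg_nonpos zero_le_power2)
  have "A' > 0"
    using assms \<open>B > 0\<close> by (simp add: A'_def field_simps)
  define G where "G \<beta>\<^sub>1 \<beta>\<^sub>2 x = of_real (sqrt (pi / B)) * exp (\<beta>\<^sub>2\<^sup>2 / of_real (4 * B))
      * exp ((\<beta>\<^sub>1 - of_real c * \<beta>\<^sub>2 / of_real (2 * B)) * of_real x - of_real A' * of_real (x\<^sup>2))"
    for \<beta>\<^sub>1 \<beta>\<^sub>2 :: complex and x :: real
  have slice: "has_bochner_integral lborel (\<lambda>y. gaussian2 A B c \<beta>\<^sub>1 \<beta>\<^sub>2 (x, y)) (G \<beta>\<^sub>1 \<beta>\<^sub>2 x)"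
    for \<beta>\<^sub>1 \<beta>\<^sub>2 x
    unfolding G_def A'_def by (rule has_bochner_integral_gaussian2_slice[OF \<open>B > 0\<close>])
  have outer: "has_bochner_integral lborel (G \<beta>\<^sub>1 \<beta>\<^sub>2)
      (of_real (sqrt (pi / B)) * exp (\<beta>\<^sub>2\<^sup>2 / of_real (4 * B))
        * (of_real (sqrt (pi / A')) * exp ((\<beta>\<^sub>1 - of_real c * \<beta>\<^sub>2 / of_real (2 * B))\<^sup>2 / of_real (4 * A'))))"
    for \<beta>\<^sub>1 \<beta>\<^sub>2
    unfolding G_def
    by (intro has_bochner_integral_mult_right has_bochner_integral_complex_gaussian \<open>A' > 0\<close>)
  have integrable: "integrable (lborel \<Otimes>\<^sub>M lborel) (gaussian2 A B c \<beta>\<^sub>1 \<beta>\<^sub>2)"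
  proof (rule lborel_pair.Fubini_integrable)
    have "(\<integral>y. norm (gaussian2 A B c \<beta>\<^sub>1 \<beta>\<^sub>2 (x, y)) \<partial>lborel) = Re (G (Re \<beta>\<^sub>1) (Re \<beta>\<^sub>2) x)" for x
      using has_bochner_integral_Re[OF slice] by (simp add: norm_gaussian2 has_bochner_integral_iff)
    moreover have "integrable lborel (\<lambda>x. Re (G (Re \<beta>\<^sub>1) (Re \<beta>\<^sub>2) x))"
      using outer by (intro integrable_Re) (auto simp: has_bochner_integral_iff)
    ultimately show "integrable lborel (\<lambda>x. \<integral>y. norm (gaussian2 A B c \<beta>\<^sub>1 \<beta>\<^sub>2 (x, y)) \<partial>lborel)"
      by simp
  qed (use slice borel_measurable_gaussian2 in \<open>auto simp: has_bochner_integral_iff lborel_prod\<close>)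
  have "integral\<^sup>L (lborel \<Otimes>\<^sub>M lborel) (gaussian2 A B c \<beta>\<^sub>1 \<beta>\<^sub>2) = (\<integral>x. G \<beta>\<^sub>1 \<beta>\<^sub>2 x \<partial>lborel)"
    using lborel_pair.integral_fst'[OF integrable] slice by (simp add: has_bochner_integral_iff)
  moreover note gaussian2_iterated_value[OF assms(2) \<open>B > 0\<close>, where \<beta>\<^sub>1 = \<beta>\<^sub>1 and \<beta>\<^sub>2 = \<beta>\<^sub>2,
    folded A'_def]
  ultimately show ?thesis
    using integrable outer by (simp add: has_bochner_integral_iff lborel_prod)
qed

lemma prod_Basis_vec:
  "(\<Prod>b\<in>(Basis :: ('a::euclidean_space^'n) set). g b) = (\<Prod>j\<in>UNIV. \<Prod>c\<in>Basis. g (axis j c))"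
proof -
  have "(\<Prod>b\<in>(Basis :: ('a^'n) set). g b) = (\<Prod>j\<in>UNIV. prod g ((\<lambda>c. axis j c) ` Basis))"
    unfolding Basis_vec_def UNION_singleton_eq_range by (rule prod.UNION_disjoint) (auto simp: axis_eq_axis)
  also have "\<dots> = (\<Prod>j\<in>UNIV. \<Prod>c\<in>Basis. g (axis j c))"
    by (intro prod.cong refl prod.reindex[unfolded comp_def] inj_onI) (auto simp: axis_eq_axis)
  finally show ?thesis .
qed

lemma prod_Basis_prod:
  "(\<Prod>b\<in>(Basis :: ('a::euclidean_space \<times> 'b::euclidean_space) set). g b)
     = (\<Prod>b\<in>Basis. g (b, 0)) * (\<Prod>b\<in>Basis. g (0, b))"
proof -
  have [simp]: "inj_on (\<lambda>u. (u, 0::'b)) Basis" "inj_on (\<lambda>u. (0::'a, u)) Basis"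
    "(\<lambda>u. (u, 0::'b)) ` (Basis::'a set) \<inter> (\<lambda>u. (0::'a, u)) ` (Basis :: 'b set) = {}"
    by (auto intro!: inj_onI)
  show ?thesis
    unfolding Basis_prod_def by (simp add: prod.union_disjoint prod.reindex)
qed

lemma prod_Basis_complex_vec_pair:
  "(\<Prod>b\<in>(Basis :: ((complex^'n) \<times> (complex^'n)) set). g b) =
    (\<Prod>j\<in>UNIV. g (axis j 1, 0) * g (axis j \<i>, 0) * g (0, axis j 1) * g (0, axis j \<i>))"
  unfolding prod_Basis_prod prod_Basis_vec prod.distrib[symmetric]
  by (simp add: Basis_complex_def mult_ac)

lemma prod_UNIV_bool_pair:
  fixes g :: "'n::finite \<times> bool \<Rightarrow> 'c::comm_monoid_mult"
  shows "(\<Prod>k\<in>UNIV. g k) = (\<Prod>j\<in>UNIV. g (j, True) * g (j, False))"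
proof -
  have "(\<Prod>j\<in>UNIV. g (j, True) * g (j, False)) = (\<Prod>j\<in>UNIV. \<Prod>\<beta>\<in>UNIV. g (j, \<beta>))"
    by (simp add: UNIV_bool mult.commute)
  also have "\<dots> = (\<Prod>k\<in>UNIV \<times> UNIV. g k)"
    unfolding prod.cartesian_product by simp
  finally show ?thesis
    by simp
qed

lemma box_Pair: "box (a, b) (c, d) = box a c \<times> box b d"
  for a c :: "'a::euclidean_space" and b d :: "'b::euclidean_space"
  by (auto simp: mem_box Basis_prod_def ball_Un)

lemma mem_box_vec: "x \<in> box a b \<longleftrightarrow> (\<forall>j. x$j \<in> box (a$j) (b$j))"
  for x a b :: "'a::euclidean_space^'n"
  by (auto simp: mem_box Basis_vec_def inner_axis)

lemma mem_box_complex: "z \<in> box a b \<longleftrightarrow> Re a < Re z \<and> Re z < Re b \<and> Im a < Im z \<and> Im z < Im b"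
  by (auto simp: mem_box Basis_complex_def)

(* Plane (j, True) carries (Re z_j, Im w_j) and plane (j, False) carries (Re w_j, Im z_j). *)
definition assemble_planes :: "('n \<times> bool \<Rightarrow> real \<times> real) \<Rightarrow> (complex^'n) \<times> (complex^'n)" where
  "assemble_planes f =
     ((\<chi> j. Complex (fst (f (j, True))) (snd (f (j, False)))),
      (\<chi> j. Complex (fst (f (j, False))) (snd (f (j, True)))))"

lemma measurable_assemble_planes:
  "assemble_planes \<in> measurable (\<Pi>\<^sub>M k\<in>UNIV. (lborel :: (real \<times> real) measure)) borel"
proof -
  have component: "(\<lambda>f. g (f k)) \<in> borel_measurable (\<Pi>\<^sub>M k\<in>UNIV. (lborel :: (real \<times> real) measure))"
    if "g \<in> borel_measurable borel" for g :: "real \<times> real \<Rightarrow> real" and k :: "'n \<times> bool"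
    using that by measurable
  show ?thesis
    by (rule borel_measurable_euclidean_space[THEN iffD2])
      (auto simp: Basis_prod_def Basis_vec_def Basis_complex_def inner_axis assemble_planes_def
        intro!: component borel_measurable_continuous_onI continuous_on_fst continuous_on_snd continuous_on_id)
qed

lemma emeasure_lborel_box_real_pair:
  fixes a b c d :: real
  assumes "a \<le> c" "b \<le> d"
  shows "emeasure lborel (box (a, b) (c, d)) = ennreal ((c - a) * (d - b))"
  using assms by (simp add: emeasure_lborel_box_eq Basis_prod_def prod.union_disjoint)

lemma vimage_assemble_planes_box:
  "assemble_planes -` box (l1, l2) (u1, u2) \<inter> space (\<Pi>\<^sub>M k\<in>UNIV. lborel) =
     (\<Pi>\<^sub>E k\<in>UNIV. case k of (j, \<beta>) \<Rightarrow>
        if \<beta> then box (Re (l1$j), Im (l2$j)) (Re (u1$j), Im (u2$j))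
        else box (Re (l2$j), Im (l1$j)) (Re (u2$j), Im (u1$j)))"
  (is "_ = (\<Pi>\<^sub>E k\<in>UNIV. ?B k)")
proof -
  have "assemble_planes f \<in> box (l1, l2) (u1, u2) \<longleftrightarrow> (\<forall>k. f k \<in> ?B k)" for f
    by (simp add: assemble_planes_def box_Pair mem_box_vec mem_box_complex
        split_paired_All all_bool_eq mem_Times_iff) blast
  then have "assemble_planes -` box (l1, l2) (u1, u2) = {f. \<forall>k. f k \<in> ?B k}"
    by blast
  then show ?thesis
    by (auto simp: space_PiM PiE_def extensional_def Pi_def)
qed

lemma lborel_eq_distr_assemble_planes:
  "(lborel :: ((complex^'n) \<times> (complex^'n)) measure) =
     distr (\<Pi>\<^sub>M k\<in>UNIV. lborel) borel assemble_planes"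
proof (rule lborel_eqI)
  show "sets (distr (\<Pi>\<^sub>M k\<in>UNIV. lborel) borel assemble_planes) = sets borel"
    by simp
next
  fix l u :: "(complex^'n) \<times> (complex^'n)"
  assume le: "\<And>b. b \<in> Basis \<Longrightarrow> l \<bullet> b \<le> u \<bullet> b"
  obtain l1 l2 u1 u2 where lu: "l = (l1, l2)" "u = (u1, u2)"
    by fastforce
  have basis: "(axis j c, 0) \<in> (Basis :: ((complex^'n) \<times> (complex^'n)) set)"
      "(0, axis j c) \<in> (Basis :: ((complex^'n) \<times> (complex^'n)) set)" if "c \<in> Basis" for j c
    using that unfolding Basis_prod_def Basis_vec_def by auto
  have le_coord: "Re (l1$j) \<le> Re (u1$j)" "Im (l1$j) \<le> Im (u1$j)"
    "Re (l2$j) \<le> Re (u2$j)" "Im (l2$j) \<le> Im (u2$j)" for j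
    using le[OF basis(1)[of 1 j]] le[OF basis(1)[of \<i> j]] le[OF basis(2)[of 1 j]] le[OF basis(2)[of \<i> j]]
    by (simp_all add: lu inner_axis)
  define vol where "vol = (\<lambda>(j, \<beta>).
    if \<beta> then (Re (u1$j) - Re (l1$j)) * (Im (u2$j) - Im (l2$j))
    else (Re (u2$j) - Re (l2$j)) * (Im (u1$j) - Im (l1$j)))"
  interpret product_sigma_finite "\<lambda>_::'n \<times> bool. (lborel :: (real \<times> real) measure)"
    by standard
  have "emeasure (distr (\<Pi>\<^sub>M k\<in>UNIV. lborel) borel assemble_planes) (box l u)
      = (\<Prod>k\<in>UNIV. emeasure lborel (case k of (j, \<beta>) \<Rightarrow>
          if \<beta> then box (Re (l1$j), Im (l2$j)) (Re (u1$j), Im (u2$j))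
          else box (Re (l2$j), Im (l1$j)) (Re (u2$j), Im (u1$j))))"
    unfolding emeasure_distr[OF measurable_assemble_planes borel_open[OF open_box]] lu vimage_assemble_planes_box
    by (rule emeasure_PiM) auto
  also have "\<dots> = (\<Prod>k\<in>UNIV. ennreal (vol k))"
    by (rule prod.cong) (auto simp: vol_def emeasure_lborel_box_real_pair le_coord)
  also have "\<dots> = ennreal (\<Prod>k\<in>UNIV. vol k)"
    by (rule prod_ennreal) (auto simp: vol_def le_coord)
  also have "(\<Prod>k\<in>UNIV. vol k) = (\<Prod>b\<in>Basis. (u - l) \<bullet> b)"
    unfolding prod_UNIV_bool_pair prod_Basis_complex_vec_pair
    by (rule prod.cong) (auto simp: vol_def lu inner_axis mult_ac)
  finally show "emeasure (distr (\<Pi>\<^sub>M k\<in>UNIV. lborel) borel assemble_planes) (box l u)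
      = (\<Prod>b\<in>Basis. (u - l) \<bullet> b)" .
qed

lemma integral_lborel_assemble_planes:
  fixes H :: "(complex^'n) \<times> (complex^'n) \<Rightarrow> 'a::{real_normed_field, banach, second_countable_topology}"
  assumes "H \<in> borel_measurable borel"
    and "\<And>f. H (assemble_planes f) = (\<Prod>j\<in>UNIV. g j (f (j, True)) * h j (f (j, False)))"
    and "\<And>j. integrable lborel (g j)" and "\<And>j. integrable lborel (h j)"
  shows "integral\<^sup>L lborel H = (\<Prod>j\<in>UNIV. integral\<^sup>L lborel (g j) * integral\<^sup>L lborel (h j))"
proof -
  define e where "e = (\<lambda>(j, \<beta>). if \<beta> then g j else h j)"
  interpret product_sigma_finite "\<lambda>_::'n \<times> bool. (lborel :: (real \<times> real) measure)"
    by standard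
  have "integral\<^sup>L lborel H = (\<integral>f. H (assemble_planes f) \<partial>(\<Pi>\<^sub>M k\<in>UNIV. lborel))"
    by (subst lborel_eq_distr_assemble_planes) (rule integral_distr[OF measurable_assemble_planes assms(1)])
  also have "\<dots> = (\<integral>f. (\<Prod>k\<in>UNIV. e k (f k)) \<partial>(\<Pi>\<^sub>M k\<in>UNIV. lborel))"
    unfolding assms(2) prod_UNIV_bool_pair by (simp add: e_def)
  also have "\<dots> = (\<Prod>k\<in>UNIV. integral\<^sup>L lborel (e k))"
    by (rule product_integral_prod) (auto simp: e_def assms(3,4))
  also have "\<dots> = (\<Prod>j\<in>UNIV. integral\<^sup>L lborel (g j) * integral\<^sup>L lborel (h j))"
    by (simp add: prod_UNIV_bool_pair e_def)
  finally show ?thesis .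
qed

definition heat_factor :: "real \<Rightarrow> real \<Rightarrow> complex \<Rightarrow> complex \<Rightarrow> complex" where
  "heat_factor P K z w = of_real P * exp (- of_real K * (z\<^sup>2 + w\<^sup>2))"

lemma cnj_heat_factor: "cnj (heat_factor P K z w) = heat_factor P K (cnj z) (cnj w)"
  by (simp add: heat_factor_def exp_cnj)

lemma pker_eq_prod_heat_factor:
  "pker s lam (z :: complex^'n) w
     = (\<Prod>j\<in>UNIV. heat_factor (lam / (4 * pi * sinh (s * lam))) (lam / 4 * coth (s * lam)) (z$j) (w$j))"
proof -
  have "(4 * pi) powi (- int CARD('n)) * (lam / sinh (s * lam)) ^ CARD('n)
      = (inverse (4 * pi) * (lam / sinh (s * lam))) ^ CARD('n)"
    by (simp only: power_int_minus power_int_of_nat power_mult_distrib power_inverse)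
  also have "inverse (4 * pi) * (lam / sinh (s * lam)) = lam / (4 * pi * sinh (s * lam))"
    by (simp add: field_simps)
  finally have prefactor: "(4 * pi) powi (- int CARD('n)) * (lam / sinh (s * lam)) ^ CARD('n)
      = (lam / (4 * pi * sinh (s * lam))) ^ CARD('n)" .
  have exponent: "- of_real (lam / 4 * coth (s * lam)) * (cdot z z + cdot w w)
     = (\<Sum>j\<in>UNIV. - of_real (lam / 4 * coth (s * lam)) * ((z$j)\<^sup>2 + (w$j)\<^sup>2))"
    unfolding cdot_def sum_distrib_left[symmetric] sum.distrib[symmetric] by (simp add: power2_eq_square)
  show ?thesis
    unfolding pker_def heat_factor_def exponent exp_sum[OF finite] prod.distrib prod_constant prefactor of_real_power ..
qed

(* The integrand of the theorem for n = 1, with P and K the prefactor and exponent of p_{2t}. *)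
definition coord_integrand :: "real \<Rightarrow> real \<Rightarrow> real \<Rightarrow> real \<Rightarrow> real \<Rightarrow> complex \<Rightarrow> complex \<Rightarrow> complex" where
  "coord_integrand P K lam a b z w =
     heat_factor P K (z + of_real a) (w + of_real b)
     * exp (\<i> * of_real (lam / 2) * (of_real a * w - of_real b * z))
     * cnj (heat_factor P K z w)
     * (4 * of_real (exp (lam * (Re w * Im z - Im w * Re z)))
        * heat_factor P K (of_real (2 * Im z)) (of_real (2 * Im w)))"

definition heat_integrand :: "real \<Rightarrow> real \<Rightarrow> real^'n \<Rightarrow> real^'n \<Rightarrow> (complex^'n) \<times> (complex^'n) \<Rightarrow> complex"
  where "heat_integrand t lam a b =
    (\<lambda>(z :: complex^'n, w :: complex^'n).
       pker (2*t) lam (z + cvec a) (w + cvec b)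
       * exp (\<i> * complex_of_real (lam/2) * (cdot (cvec a) w - cdot (cvec b) z))
       * cnj (pker (2*t) lam z w)
       * Wker t lam z w)"

lemma heat_integrand_eq_prod_coord_integrand:
  fixes z w :: "complex^'n" and a b :: "real^'n" and t lam :: real
  defines "P \<equiv> lam / (4 * pi * sinh (2 * t * lam))" and "K \<equiv> lam / 4 * coth (2 * t * lam)"
  shows "heat_integrand t lam a b (z, w) = (\<Prod>j\<in>UNIV. coord_integrand P K lam (a$j) (b$j) (z$j) (w$j))"
proof -
  have "exp (\<i> * complex_of_real (lam / 2) * (cdot (cvec a) w - cdot (cvec b) z))
      = (\<Prod>j\<in>UNIV. exp (\<i> * of_real (lam / 2) * (of_real (a$j) * w$j - of_real (b$j) * z$j)))"
    unfolding exp_sum[OF finite, symmetric] cdot_def sum_distrib_left sum_subtractf[symmetric]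
    by (simp add: cvec_def)
  moreover have "Wker t lam z w
      = (\<Prod>j\<in>UNIV. 4 * of_real (exp (lam * (Re (w$j) * Im (z$j) - Im (w$j) * Re (z$j))))
          * heat_factor P K (of_real (2 * Im (z$j))) (of_real (2 * Im (w$j))))"
  proof -
    have "lam * (re_vec w \<bullet> im_vec z - im_vec w \<bullet> re_vec z)
        = (\<Sum>j\<in>UNIV. lam * (Re (w$j) * Im (z$j) - Im (w$j) * Re (z$j)))"
      unfolding inner_vec_def sum_distrib_left[symmetric] sum_subtractf[symmetric]
      by (simp add: re_vec_def im_vec_def)
    then have "exp (lam * (re_vec w \<bullet> im_vec z - im_vec w \<bullet> re_vec z))
        = (\<Prod>j\<in>UNIV. exp (lam * (Re (w$j) * Im (z$j) - Im (w$j) * Re (z$j))))"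
      by (simp add: exp_sum)
    then have weight: "complex_of_real (4 ^ CARD('n) * exp (lam * (re_vec w \<bullet> im_vec z - im_vec w \<bullet> re_vec z)))
        = (\<Prod>j\<in>UNIV. 4 * of_real (exp (lam * (Re (w$j) * Im (z$j) - Im (w$j) * Re (z$j)))))"
      unfolding prod.distrib prod_constant of_real_mult of_real_prod by simp
    show ?thesis
      unfolding Wker_def Let_def weight pker_eq_prod_heat_factor prod.distrib[symmetric] P_def K_def
      by (simp add: cvec_def im_vec_def)
  qed
  ultimately show ?thesis
    by (simp add: heat_integrand_def pker_eq_prod_heat_factor coord_integrand_def cnj_heat_factor cvec_def
        P_def K_def prod.distrib[symmetric])
qed

lemma borel_measurable_heat_integrand: "heat_integrand t lam a b \<in> borel_measurable borel"
  unfolding heat_integrand_def pker_def Wker_def Let_def cdot_def re_vec_def im_vec_def cvec_def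
    inner_vec_def split_beta
  by (intro borel_measurable_continuous_onI continuous_intros)

definition plane_gaussian :: "real \<Rightarrow> real \<Rightarrow> real \<Rightarrow> real \<Rightarrow> real \<times> real \<Rightarrow> complex" where
  "plane_gaussian K lam a b =
     gaussian2 (2 * K) (2 * K) lam (Complex (- 2 * K * a) (- lam * b / 2)) (Complex (- lam * a / 2) (- 2 * K * b))"

lemma coord_integrand_separates:
  "coord_integrand P K lam a b (Complex x y) (Complex u v)
     = of_real (4 * P ^ 3 * exp (- K * (a\<^sup>2 + b\<^sup>2)))
       * plane_gaussian K lam a b (x, v) * plane_gaussian K (- lam) b a (u, y)"
proof -
  define z where "z = Complex x y"
  define w where "w = Complex u v"
  define E1 where "E1 = - of_real K * ((z + of_real a)\<^sup>2 + (w + of_real b)\<^sup>2)"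
  define E2 where "E2 = \<i> * of_real (lam / 2) * (of_real a * w - of_real b * z)"
  define E3 where "E3 = - of_real K * ((cnj z)\<^sup>2 + (cnj w)\<^sup>2)"
  define E4 where "E4 = complex_of_real (lam * (Re w * Im z - Im w * Re z))"
  define E5 where "E5 = - of_real K * ((complex_of_real (2 * Im z))\<^sup>2 + (complex_of_real (2 * Im w))\<^sup>2)"
  define F0 where "F0 = complex_of_real (- K * (a\<^sup>2 + b\<^sup>2))"
  define F where "F = Complex (- 2 * K * a) (- lam * b / 2) * of_real x + Complex (- lam * a / 2) (- 2 * K * b) * of_real v
      - of_real (2 * K) * of_real (x\<^sup>2) - of_real lam * of_real x * of_real v - of_real (2 * K) * of_real (v\<^sup>2)"
  define G where "G = Complex (- 2 * K * b) (lam * a / 2) * of_real u + Complex (lam * b / 2) (- 2 * K * a) * of_real y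
      - of_real (2 * K) * of_real (u\<^sup>2) - of_real (- lam) * of_real u * of_real y - of_real (2 * K) * of_real (y\<^sup>2)"
  have "coord_integrand P K lam a b z w
      = of_real P * exp E1 * exp E2 * (of_real P * exp E3) * (4 * exp E4 * (of_real P * exp E5))"
    unfolding coord_integrand_def cnj_heat_factor
    unfolding heat_factor_def E1_def E2_def E3_def E4_def E5_def exp_of_real[symmetric] ..
  also have "\<dots> = of_real (4 * P ^ 3) * exp (E1 + E2 + E3 + E4 + E5)"
    unfolding exp_add by (simp add: power3_eq_cube mult_ac)
  also have "E1 + E2 + E3 + E4 + E5 = F0 + F + G"
    unfolding E1_def E2_def E3_def E4_def E5_def F0_def F_def G_def z_def w_def
    by (rule complex_eqI) (simp_all add: power2_eq_square algebra_simps)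
  also have "of_real (4 * P ^ 3) * exp (F0 + F + G)
      = of_real (4 * P ^ 3 * exp (- K * (a\<^sup>2 + b\<^sup>2))) * exp F * exp G"
    unfolding exp_add of_real_mult F0_def exp_of_real[symmetric] by (simp only: mult_ac)
  finally have "coord_integrand P K lam a b z w
      = of_real (4 * P ^ 3 * exp (- K * (a\<^sup>2 + b\<^sup>2))) * exp F * exp G" .
  moreover have "exp F = plane_gaussian K lam a b (x, v)" "exp G = plane_gaussian K (- lam) b a (u, y)"
    by (simp_all add: plane_gaussian_def gaussian2_def F_def G_def)
  ultimately show ?thesis
    by (simp only: z_def w_def)
qed

lemma has_bochner_integral_plane_gaussian:
  assumes "K > 0" and "lam\<^sup>2 < 16 * K\<^sup>2"
  shows "has_bochner_integral lborel (plane_gaussian K lam a b)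
           (of_real (pi / sqrt (4 * K\<^sup>2 - lam\<^sup>2 / 4)) * exp (Complex (K * (a\<^sup>2 - b\<^sup>2) / 2) (lam * a * b / 4)))"
proof -
  define \<beta>\<^sub>1 where "\<beta>\<^sub>1 = Complex (- 2 * K * a) (- lam * b / 2)"
  define \<beta>\<^sub>2 where "\<beta>\<^sub>2 = Complex (- lam * a / 2) (- 2 * K * b)"
  have "has_bochner_integral lborel (plane_gaussian K lam a b)
      (of_real (pi / sqrt (2 * K * (2 * K) - lam\<^sup>2 / 4))
       * exp ((of_real (2 * K) * \<beta>\<^sub>1\<^sup>2 + of_real (2 * K) * \<beta>\<^sub>2\<^sup>2 - of_real lam * \<beta>\<^sub>1 * \<beta>\<^sub>2)
              / of_real (4 * (2 * K) * (2 * K) - lam\<^sup>2)))"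
    unfolding plane_gaussian_def \<beta>\<^sub>1_def \<beta>\<^sub>2_def
    using assms by (intro has_bochner_integral_gaussian2) (simp_all add: power2_eq_square)
  moreover have "(of_real (2 * K) * \<beta>\<^sub>1\<^sup>2 + of_real (2 * K) * \<beta>\<^sub>2\<^sup>2 - of_real lam * \<beta>\<^sub>1 * \<beta>\<^sub>2)
              / of_real (4 * (2 * K) * (2 * K) - lam\<^sup>2) = Complex (K * (a\<^sup>2 - b\<^sup>2) / 2) (lam * a * b / 4)"
  proof -
    have "4 * (2 * K) * (2 * K) - lam\<^sup>2 \<noteq> 0"
      using assms(2) by (simp add: power2_eq_square)
    then show ?thesis
      by (intro complex_eqI) (simp_all add: \<beta>\<^sub>1_def \<beta>\<^sub>2_def power2_eq_square field_simps)
  qed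
  moreover have "2 * K * (2 * K) = 4 * K\<^sup>2"
    by (simp add: power2_eq_square)
  ultimately show ?thesis
    by simp
qed

lemma heat_kernel_constants:
  fixes s lam :: real
  assumes "s > 0" and "lam \<noteq> 0"
  defines "P \<equiv> lam / (4 * pi * sinh (s * lam))" and "K \<equiv> lam / 4 * coth (s * lam)"
  shows "K > 0" and "lam\<^sup>2 < 16 * K\<^sup>2" and "4 * K\<^sup>2 - lam\<^sup>2 / 4 = (2 * pi * P)\<^sup>2"
proof -
  define S where "S = sinh (s * lam)"
  define C where "C = cosh (s * lam)"
  have "lam * S > 0"
    using assms(1,2) by (cases "lam > 0") (auto simp: S_def mult_neg_neg mult_pos_neg)
  then have "S \<noteq> 0"
    by auto
  have "C > 0" "C\<^sup>2 = S\<^sup>2 + 1"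
    unfolding C_def S_def by (simp_all add: cosh_square_eq)
  have K: "K = lam * S * C / (4 * S\<^sup>2)"
    using \<open>S \<noteq> 0\<close> by (simp add: K_def coth_def S_def C_def power2_eq_square)
  then show "K > 0"
    using \<open>lam * S > 0\<close> \<open>C > 0\<close> \<open>S \<noteq> 0\<close> by simp
  have "4 * K\<^sup>2 = lam\<^sup>2 / 4 + lam\<^sup>2 / (4 * S\<^sup>2)"
    using \<open>S \<noteq> 0\<close> \<open>C\<^sup>2 = S\<^sup>2 + 1\<close> unfolding K by (simp add: field_simps power2_eq_square) algebra
  moreover have "lam\<^sup>2 / (4 * S\<^sup>2) > 0"
    using assms(2) \<open>S \<noteq> 0\<close> by simp
  moreover have "(2 * pi * P)\<^sup>2 = lam\<^sup>2 / (4 * S\<^sup>2)"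
    using \<open>S \<noteq> 0\<close> by (simp add: P_def S_def[symmetric] power2_eq_square)
  ultimately show "lam\<^sup>2 < 16 * K\<^sup>2" and "4 * K\<^sup>2 - lam\<^sup>2 / 4 = (2 * pi * P)\<^sup>2"
    by linarith+
qed

lemma plane_gaussian_integral_product:
  assumes "K > 0" and "lam\<^sup>2 < 16 * K\<^sup>2" and "4 * K\<^sup>2 - lam\<^sup>2 / 4 = (2 * pi * P)\<^sup>2"
  shows "of_real (4 * P ^ 3 * exp (- K * (a\<^sup>2 + b\<^sup>2)))
           * integral\<^sup>L lborel (plane_gaussian K lam a b) * integral\<^sup>L lborel (plane_gaussian K (- lam) b a)
         = heat_factor P K (of_real a) (of_real b)"
proof -
  define D where "D = 4 * K\<^sup>2 - lam\<^sup>2 / 4"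
  define c where "c = Complex (K * (a\<^sup>2 - b\<^sup>2) / 2) (lam * a * b / 4)"
  define c' where "c' = Complex (K * (b\<^sup>2 - a\<^sup>2) / 2) (- lam * b * a / 4)"
  have "D > 0" "P \<noteq> 0"
    using assms(2,3) by (auto simp: D_def)
  have first: "integral\<^sup>L lborel (plane_gaussian K lam a b) = of_real (pi / sqrt D) * exp c"
    using has_bochner_integral_plane_gaussian[OF assms(1,2)]
    unfolding D_def c_def by (rule has_bochner_integral_integral_eq)
  have second: "integral\<^sup>L lborel (plane_gaussian K (- lam) b a) = of_real (pi / sqrt D) * exp c'"
    using has_bochner_integral_plane_gaussian[OF assms(1), of "- lam"] assms(2)
    unfolding D_def c'_def by (simp add: has_bochner_integral_integral_eq)
  have "c + c' = 0"
    by (simp add: c_def c'_def complex_eq_iff field_simps)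
  have "4 * P ^ 3 * ((pi / sqrt D) * (pi / sqrt D)) = P"
    using \<open>D > 0\<close> \<open>P \<noteq> 0\<close> assms(3) by (simp add: D_def power2_eq_square power3_eq_cube field_simps)
  have "of_real (4 * P ^ 3 * exp (- K * (a\<^sup>2 + b\<^sup>2)))
           * integral\<^sup>L lborel (plane_gaussian K lam a b) * integral\<^sup>L lborel (plane_gaussian K (- lam) b a)
      = of_real (4 * P ^ 3 * ((pi / sqrt D) * (pi / sqrt D)) * exp (- K * (a\<^sup>2 + b\<^sup>2))) * exp (c + c')"
    unfolding first second exp_add of_real_mult by (simp only: mult_ac)
  also have "\<dots> = heat_factor P K (of_real a) (of_real b)"
    unfolding \<open>c + c' = 0\<close> \<open>4 * P ^ 3 * ((pi / sqrt D) * (pi / sqrt D)) = P\<close>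
    by (simp add: heat_factor_def flip: exp_of_real)
  finally show ?thesis .
qed

theorem lemma4p2:
  fixes t lam :: real and a b :: "real^'n"
  assumes "t > 0" and "lam \<noteq> 0"
  shows "integral\<^sup>L lborel
           (\<lambda>(z :: complex^'n, w :: complex^'n).
              pker (2*t) lam (z + cvec a) (w + cvec b)
              * exp (\<i> * complex_of_real (lam/2) * (cdot (cvec a) w - cdot (cvec b) z))
              * cnj (pker (2*t) lam z w)
              * Wker t lam z w)
         = pker (2*t) lam (cvec a) (cvec b)"
proof -
  define P where "P = lam / (4 * pi * sinh (2 * t * lam))"
  define K where "K = lam / 4 * coth (2 * t * lam)"
  have K: "K > 0" "lam\<^sup>2 < 16 * K\<^sup>2" "4 * K\<^sup>2 - lam\<^sup>2 / 4 = (2 * pi * P)\<^sup>2"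
    using heat_kernel_constants[of "2 * t" lam] assms unfolding P_def K_def by auto
  define g where "g j = (\<lambda>p. of_real (4 * P ^ 3 * exp (- K * ((a$j)\<^sup>2 + (b$j)\<^sup>2)))
    * plane_gaussian K lam (a$j) (b$j) p)" for j
  define h where "h j = plane_gaussian K (- lam) (b$j) (a$j)" for j
  have "integrable lborel (plane_gaussian K c x y)" if "c\<^sup>2 < 16 * K\<^sup>2" for c x y
    using has_bochner_integral_plane_gaussian[OF K(1) that] by (auto simp: has_bochner_integral_iff)
  then have integrable: "integrable lborel (g j)" "integrable lborel (h j)" for j
    unfolding g_def h_def using K(2) by (auto intro: integrable_mult_right)
  have "integral\<^sup>L lborel (heat_integrand t lam a b)
      = (\<Prod>j\<in>UNIV. integral\<^sup>L lborel (g j) * integral\<^sup>L lborel (h j))"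
  proof (rule integral_lborel_assemble_planes)
    show "heat_integrand t lam a b (assemble_planes f) = (\<Prod>j\<in>UNIV. g j (f (j, True)) * h j (f (j, False)))"
      for f
      by (simp add: assemble_planes_def heat_integrand_eq_prod_coord_integrand[of t lam, folded P_def K_def]
          coord_integrand_separates g_def h_def)
  qed (simp_all add: borel_measurable_heat_integrand integrable)
  also have "\<dots> = (\<Prod>j\<in>UNIV. heat_factor P K (of_real (a$j)) (of_real (b$j)))"
    using plane_gaussian_integral_product[OF K] by (simp add: g_def h_def mult.assoc)
  also have "\<dots> = pker (2*t) lam (cvec a) (cvec b)"
    by (simp add: pker_eq_prod_heat_factor P_def K_def cvec_def)
  finally show ?thesis
    unfolding heat_integrand_def .
qed

end
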